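(* Let $K$ be a non-planar continuum. Then $T(x)\subset S(x)$ for every $x\in K$.
   Context: For a compactum $K$ and $A\subset K$, $T(A)$ is the set of all $y\in K$ for which there do not exist both an open set $Q\subset K$ and a continuum $W$ with $y\in Q\subset W\subset K\setminus A$; $T(x)=T(\{x\})$. $S(x)$ is the set of all $y\in K$ for which there do NOT exist two disjoint open sets $U_x,U_y\subset K$ with $x\in U_x$, $y\in U_y$ such that $K\setminus(U_x\cup U_y)$ has at most finitely many components intersecting both $\partial U_x$ and $\partial U_y$. *)

theory Defs
  imports "HOL-Analysis.Analysis"
begin

definition continuum_in :: "'a topology \<Rightarrow> 'a set \<Rightarrow> bool" where
  "continuum_in X W \<longleftrightarrow> W \<subseteq> topspace X \<and> W \<noteq> {} \<and> compactin X W \<and> connectedin X W"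

definition T_set :: "'a topology \<Rightarrow> 'a set \<Rightarrow> 'a set" where
  "T_set X A = {y \<in> topspace X. \<not> (\<exists>Q W. openin X Q \<and> continuum_in X W \<and>
        y \<in> Q \<and> Q \<subseteq> W \<and> W \<subseteq> topspace X - A)}"

definition S_set :: "'a topology \<Rightarrow> 'a \<Rightarrow> 'a set" where
  "S_set X x = {y \<in> topspace X. \<not> (\<exists>Ux Uy. openin X Ux \<and> openin X Uy \<and> Ux \<inter> Uy = {} \<and>
        x \<in> Ux \<and> y \<in> Uy \<and>
        finite {C \<in> connected_components_of (subtopology X (topspace X - (Ux \<union> Uy))).
                  C \<inter> (X frontier_of Ux) \<noteq> {} \<and> C \<inter> (X frontier_of Uy) \<noteq> {}})}"

definition planar_space :: "'a topology \<Rightarrow> bool" where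
  "planar_space X \<longleftrightarrow> (\<exists>f :: 'a \<Rightarrow> real^2. embedding_map X euclidean f)"

end

theory Submission
  imports Defs
begin

text \<open>
  Suppose y is in T(x) but not in S(x), witnessed by disjoint open sets U \<ni> x and V \<ni> y with
  only finitely many components of K - (U \<union> V) joining their boundaries.  By boundary bumping,
  every component D of K - U that meets V contains such a joining component, and distinct D
  contain distinct ones; so only finitely many components of K - U meet V.  Removing the other
  ones from V leaves an open neighbourhood of y inside the component of y in K - U, which is a
  continuum avoiding x, contradicting y \<in> T(x).
\<close>

lemma closedin_subtopology_diff_openin:
  assumes "openin X U"
  shows "closedin (subtopology X D) (topspace (subtopology X D) - U)"
proof -
  have "topspace (subtopology X D) - U = topspace (subtopology X D) - (U \<inter> D)"
    by auto
  then show ?thesis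
    using closedin_diff[OF closedin_topspace openin_subtopology_Int[OF assms]] by simp
qed

lemma frontier_of_subtopology_diff_subset:
  assumes "openin X U"
  shows "subtopology X D frontier_of (topspace (subtopology X D) - U) \<subseteq> X frontier_of U"
proof
  let ?Y = "subtopology X D"
  fix q assume q: "q \<in> ?Y frontier_of (topspace ?Y - U)"
  then have "q \<notin> U"
    using closedin_subtopology_diff_openin[OF assms] frontier_of_subset_closedin by fastforce
  moreover have "q \<in> X closure_of U"
  proof -
    have "q \<in> ?Y frontier_of U"
      using q by (simp only: frontier_of_complement)
    then have "q \<in> ?Y closure_of U"
      unfolding frontier_of_def by blast
    then show ?thesis
      by (meson closure_of_subtopology_subset subsetD)
  qed
  ultimately show "q \<in> X frontier_of U"
    using interior_of_subset[of X U] unfolding frontier_of_def by blast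
qed

lemma connected_component_of_diff_meets_frontier:
  assumes "Hausdorff_space X" "compactin X D" "connectedin X D"
    and "openin X U" "D \<inter> U \<noteq> {}" "p \<in> D - U"
  shows "connected_component_of_set (subtopology X (D - U)) p \<inter> X frontier_of U \<noteq> {}"
proof -
  let ?Y = "subtopology X D"
  let ?E = "connected_component_of_set (subtopology X (D - U)) p"
  have "D \<subseteq> topspace X"
    using assms(2) compactin_subset_topspace by blast
  then have Y: "topspace ?Y = D"
    by (simp add: Int_absorb1)
  have sub: "subtopology ?Y (D - U) = subtopology X (D - U)"
    by (simp add: subtopology_subtopology Int_absorb1)
  have "p \<in> topspace (subtopology X (D - U))"
    using assms(6) Y by auto
  then have "?E \<in> connected_components_of (subtopology ?Y (D - U))"
    unfolding sub by (simp only: connected_component_in_connected_components_of)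
  moreover have "D - U \<noteq> D"
    using assms(5) by blast
  ultimately have "?E \<inter> ?Y frontier_of (topspace ?Y - U) \<noteq> {}"
    using boundary_bumping_theorem_closed[OF connected_space_subtopology[OF assms(3)]
        compact_space_subtopology[OF assms(2)] Hausdorff_space_subtopology[OF assms(1)]
        closedin_subtopology_diff_openin[OF assms(4)]] Y by simp
  then show ?thesis
    using frontier_of_subtopology_diff_subset[OF assms(4)] by blast
qed

lemma closedin_connected_components_of_subtopology:
  assumes "closedin X S" "C \<in> connected_components_of (subtopology X S)"
  shows "closedin X C"
  using closedin_trans_full[OF closedin_connected_components_of[OF assms(2)] assms(1)] .

lemma connected_component_of_subset_connected_component:
  assumes "C \<in> connected_components_of (subtopology X S)" "T \<subseteq> S" "p \<in> C" "p \<in> T"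
  shows "connected_component_of_set (subtopology X T) p \<subseteq> C"
proof (rule connected_components_of_maximal[OF assms(1)])
  let ?E = "connected_component_of_set (subtopology X T) p"
  have "connectedin X ?E"
    using connectedin_connected_component_of[of "subtopology X T" p] connectedin_subtopology by blast
  moreover have "?E \<subseteq> S"
    using connected_component_of_subset_topspace[of "subtopology X T" p] assms(2) by auto
  ultimately show "connectedin (subtopology X S) ?E"
    by (simp add: connectedin_subtopology)
  have "p \<in> topspace X"
    using connected_components_of_subset[OF assms(1)] assms(3) by auto
  then have "p \<in> ?E"
    using assms(4) by (simp add: connected_component_of_refl)
  then show "\<not> disjnt C ?E"
    using assms(3) by (auto simp: disjnt_def)
qed

definition bridging_components :: "'a topology \<Rightarrow> 'a set \<Rightarrow> 'a set \<Rightarrow> 'a set set" where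
  "bridging_components X U V =
     {C \<in> connected_components_of (subtopology X (topspace X - (U \<union> V))).
        C \<inter> (X frontier_of U) \<noteq> {} \<and> C \<inter> (X frontier_of V) \<noteq> {}}"

lemma connected_component_contains_bridging_component:
  assumes "connected_space X" "compact_space X" "Hausdorff_space X"
    and "openin X U" "openin X V" "U \<inter> V = {}" "U \<noteq> {}"
    and D: "D \<in> connected_components_of (subtopology X (topspace X - U))" "D \<inter> V \<noteq> {}"
  shows "\<exists>E \<in> bridging_components X U V. E \<subseteq> D"
proof -
  let ?F = "topspace X - (U \<union> V)"
  have closed: "closedin X (topspace X - U)"
    using assms(4) by blast
  have "topspace X - U \<noteq> topspace X"
    using assms(4,7) openin_subset by blast
  then have "D \<inter> X frontier_of U \<noteq> {}"
    using boundary_bumping_theorem_closed[OF assms(1-3) closed _ D(1)] by (simp add: frontier_of_complement)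
  then obtain p where p: "p \<in> D" "p \<in> X frontier_of U"
    by blast
  have DF: "D \<subseteq> topspace X - U"
    using connected_components_of_subset[OF D(1)] by auto
  have "p \<notin> V"
    using p(2) assms(5,6) openin_Int_closure_of_eq_empty[of X V U] unfolding frontier_of_def by blast
  then have pF: "p \<in> ?F"
    using p(1) DF by blast
  let ?E = "connected_component_of_set (subtopology X ?F) p"
  have E: "?E \<in> connected_components_of (subtopology X ?F)"
    using pF by (simp add: connected_component_in_connected_components_of)
  have pE: "p \<in> ?E"
    using pF by (simp add: connected_component_of_refl)
  have "?F \<subseteq> topspace X - U"
    by blast
  then have "?E \<subseteq> D"
    by (rule connected_component_of_subset_connected_component[OF D(1) _ p(1) pF])
  moreover have "?E \<inter> X frontier_of V \<noteq> {}"
  proof -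
    have "closedin X D"
      by (rule closedin_connected_components_of_subtopology[OF closed D(1)])
    then have "compactin X D"
      by (rule closedin_compact_space[OF assms(2)])
    moreover have "connectedin X D"
      using connectedin_connected_components_of[OF D(1)] connectedin_subtopology by blast
    ultimately have "connected_component_of_set (subtopology X (D - V)) p \<inter> X frontier_of V \<noteq> {}"
      using connected_component_of_diff_meets_frontier[OF assms(3) _ _ assms(5) D(2)] p(1) \<open>p \<notin> V\<close>
      by blast
    moreover have "D - V \<subseteq> ?F" "p \<in> D - V"
      using DF p(1) \<open>p \<notin> V\<close> by blast+
    then have "connected_component_of_set (subtopology X (D - V)) p \<subseteq> ?E"
      by (rule connected_component_of_subset_connected_component[OF E _ pE])
    ultimately show ?thesis
      by blast
  qed
  moreover have "?E \<inter> X frontier_of U \<noteq> {}"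
    using p(2) pE by blast
  ultimately show ?thesis
    using E unfolding bridging_components_def by blast
qed

lemma finite_components_meeting_if_finite_bridging:
  assumes "connected_space X" "compact_space X" "Hausdorff_space X"
    and "openin X U" "openin X V" "U \<inter> V = {}" "U \<noteq> {}"
    and "finite (bridging_components X U V)"
  shows "finite {D \<in> connected_components_of (subtopology X (topspace X - U)). D \<inter> V \<noteq> {}}"
    (is "finite ?\<D>")
proof -
  have "\<forall>D \<in> ?\<D>. \<exists>E. E \<in> bridging_components X U V \<and> E \<subseteq> D"
    using connected_component_contains_bridging_component[OF assms(1-7)] by blast
  then obtain f where f: "\<And>D. D \<in> ?\<D> \<Longrightarrow> f D \<in> bridging_components X U V \<and> f D \<subseteq> D"
    by metis
  have "inj_on f ?\<D>"
  proof (rule inj_onI)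
    fix D D' assume D: "D \<in> ?\<D>" "D' \<in> ?\<D>" "f D = f D'"
    have "f D \<noteq> {}"
      using f[OF D(1)] unfolding bridging_components_def by blast
    then have "D \<inter> D' \<noteq> {}"
      using f[OF D(1)] f[OF D(2)] D(3) by blast
    then show "D = D'"
      using D(1,2) connected_components_of_overlap[of D _ D'] by blast
  qed
  then show ?thesis
    using inj_on_finite f assms(8) by blast
qed

lemma exists_openin_subset_connected_component_of:
  assumes "closedin X S" "openin X V" "V \<subseteq> S"
    and "finite {D \<in> connected_components_of (subtopology X S). D \<inter> V \<noteq> {}}" (is "finite ?\<D>")
    and "y \<in> V"
  shows "\<exists>Q. openin X Q \<and> y \<in> Q \<and> Q \<subseteq> connected_component_of_set (subtopology X S) y"
proof -
  let ?C = "\<lambda>q. connected_component_of_set (subtopology X S) q"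
  have C: "?C q \<in> ?\<D>" "q \<in> ?C q" if "q \<in> V" for q
  proof -
    have q: "q \<in> topspace (subtopology X S)"
      using that assms(3) openin_subset[OF assms(2)] by auto
    then show "q \<in> ?C q"
      by (simp add: connected_component_of_refl)
    moreover have "?C q \<in> connected_components_of (subtopology X S)"
      using q by (simp only: connected_component_in_connected_components_of)
    ultimately show "?C q \<in> ?\<D>"
      using that by blast
  qed
  let ?Q = "V - \<Union>(?\<D> - {?C y})"
  have "closedin X D" if "D \<in> ?\<D>" for D
    using that closedin_connected_components_of_subtopology[OF assms(1)] by blast
  then have "openin X ?Q"
    using assms(2,4) by (intro openin_diff closedin_Union) auto
  moreover have "y \<in> ?Q"
  proof -
    have "y \<notin> D" if "D \<in> ?\<D> - {?C y}" for D
    proof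
      assume "y \<in> D"
      then have "D \<inter> ?C y \<noteq> {}"
        using C(2)[OF assms(5)] by blast
      then show False
        using that C(1)[OF assms(5)] connected_components_of_overlap[of D "subtopology X S" "?C y"] by blast
    qed
    then show ?thesis
      using assms(5) by blast
  qed
  moreover have "?Q \<subseteq> ?C y"
    using C by blast
  ultimately show ?thesis
    by blast
qed

lemma continuum_in_connected_component_of:
  assumes "compact_space X" "closedin X S" "y \<in> S"
  shows "continuum_in X (connected_component_of_set (subtopology X S) y)"
proof -
  let ?C = "connected_component_of_set (subtopology X S) y"
  have y: "y \<in> topspace (subtopology X S)"
    using assms(3) closedin_subset[OF assms(2)] by auto
  then have "?C \<in> connected_components_of (subtopology X S)"
    by (simp only: connected_component_in_connected_components_of)
  then have closed: "closedin X ?C"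
    by (rule closedin_connected_components_of_subtopology[OF assms(2)])
  have "connectedin X ?C"
    using connectedin_connected_component_of[of "subtopology X S" y] by (simp only: connectedin_subtopology)
  moreover have "?C \<noteq> {}"
    using y by (metis connected_component_of_eq_empty)
  ultimately show ?thesis
    unfolding continuum_in_def
    using closedin_subset[OF closed] closedin_compact_space[OF assms(1) closed] by blast
qed

lemma T_set_singleton_subset_S_set:
  assumes "connected_space X" "compact_space X" "Hausdorff_space X"
  shows "T_set X {x} \<subseteq> S_set X x"
proof
  fix y assume y: "y \<in> T_set X {x}"
  then have "y \<in> topspace X"
    by (simp add: T_set_def)
  then show "y \<in> S_set X x"
    unfolding S_set_def
  proof (intro CollectI conjI notI)
    assume "\<exists>U V. openin X U \<and> openin X V \<and> U \<inter> V = {} \<and> x \<in> U \<and> y \<in> V \<and>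
        finite {C \<in> connected_components_of (subtopology X (topspace X - (U \<union> V))).
                  C \<inter> (X frontier_of U) \<noteq> {} \<and> C \<inter> (X frontier_of V) \<noteq> {}}"
    then obtain U V where UV: "openin X U" "openin X V" "U \<inter> V = {}" "x \<in> U" "y \<in> V"
      and fin: "finite (bridging_components X U V)"
      unfolding bridging_components_def by blast
    let ?C = "connected_component_of_set (subtopology X (topspace X - U)) y"
    have closed: "closedin X (topspace X - U)"
      using UV(1) by blast
    have VS: "V \<subseteq> topspace X - U"
      using UV(3) openin_subset[OF UV(2)] by blast
    have "U \<noteq> {}"
      using UV(4) by blast
    then have "finite {D \<in> connected_components_of (subtopology X (topspace X - U)). D \<inter> V \<noteq> {}}"
      by (rule finite_components_meeting_if_finite_bridging[OF assms UV(1-3) _ fin])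
    then obtain Q where "openin X Q" "y \<in> Q" "Q \<subseteq> ?C"
      using exists_openin_subset_connected_component_of[OF closed UV(2) VS _ UV(5)] by blast
    moreover have "continuum_in X ?C"
      using continuum_in_connected_component_of[OF assms(2) closed] VS UV(5) by blast
    moreover have "?C \<subseteq> topspace X - {x}"
      using connected_component_of_subset_topspace[of "subtopology X (topspace X - U)" y] UV(4)
      by auto
    ultimately show False
      using y unfolding T_set_def by blast
  qed
qed

theorem theorem9p7:
  fixes X :: "'a topology" and x :: 'a
  assumes "metrizable_space X" and "compact_space X" and "connected_space X"
    and "topspace X \<noteq> {}"
    and "\<not> planar_space X"
    and "x \<in> topspace X"
  shows "T_set X {x} \<subseteq> S_set X x"
  using T_set_singleton_subset_S_set[OF assms(3,2) metrizable_imp_Hausdorff_space[OF assms(1)]] .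

end
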